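(* For $i=1,2$ let $G_i$ be an $r_i$-regular graph with $n_i$ vertices. (a) If both $G_1$ and $G_2$ admit balanced labellings and $r_1r_2+r_1+r_2$ is coprime to $n_1n_2$, then $G_1\boxtimes G_2$ is $\mathbb{Z}_{n_1n_2}$-distance antimagic. (b) If $G_1$ is $\mathbb{Z}_{n_1}$-distance magic, $G_2$ is $\mathbb{Z}_{n_2}$-distance magic, $\gcd(r_1,n_2)=1$ and $\gcd(r_2,n_1)=1$, then $G_1\boxtimes G_2$ is $\mathbb{Z}_{n_1n_2}$-distance antimagic.
   Context: The strong product $G_1\boxtimes G_2$ has vertex set $V(G_1)\times V(G_2)$, with distinct $(x_1,x_2),(y_1,y_2)$ adjacent iff for each $i$ either $x_i=y_i$ or $x_iy_i\in E(G_i)$. For an $r$-regular graph $G$ with $n$ vertices, a balanced labelling is a bijection $f:V(G)\to\mathbb{Z}_n$ with $\sum_{y\in N(x)}f(y)\equiv rf(x)\pmod n$ for all $x$ ($N(x)$ the open neighbourhood). For a graph $G$ with $n$ vertices and a bijection $f:V(G)\to\mathbb{Z}_n$, the weight is $w_f(x)=\sum_{y\in N(x)} f(y)$ mod $n$; $f$ is $\mathbb{Z}_n$-distance antimagic if the weights are pairwise distinct, and $\mathbb{Z}_n$-distance magic if all weights are equal. $G$ is $\mathbb{Z}_n$-distance antimagic (resp. magic) if it admits such a labelling. *)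

theory Defs
  imports Main
begin

definition simple_graph :: "'a set \<Rightarrow> ('a \<Rightarrow> 'a \<Rightarrow> bool) \<Rightarrow> bool" where
  "simple_graph V E \<longleftrightarrow> finite V \<and> (\<forall>x y. E x y \<longrightarrow> x \<in> V \<and> y \<in> V)
     \<and> (\<forall>x y. E x y \<longrightarrow> E y x) \<and> (\<forall>x. \<not> E x x)"

definition nbhd :: "'a set \<Rightarrow> ('a \<Rightarrow> 'a \<Rightarrow> bool) \<Rightarrow> 'a \<Rightarrow> 'a set" where
  "nbhd V E x = {y \<in> V. E x y}"

definition regular :: "'a set \<Rightarrow> ('a \<Rightarrow> 'a \<Rightarrow> bool) \<Rightarrow> nat \<Rightarrow> bool" where
  "regular V E r \<longleftrightarrow> (\<forall>x \<in> V. card (nbhd V E x) = r)"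

text \<open>Z_n is represented by the integers {0..<n}, arithmetic taken mod n.\<close>

definition Zn_labelling :: "'a set \<Rightarrow> ('a \<Rightarrow> int) \<Rightarrow> bool" where
  "Zn_labelling V f \<longleftrightarrow> bij_betw f V {0..<int (card V)}"

definition weight :: "'a set \<Rightarrow> ('a \<Rightarrow> 'a \<Rightarrow> bool) \<Rightarrow> ('a \<Rightarrow> int) \<Rightarrow> 'a \<Rightarrow> int" where
  "weight V E f x = (\<Sum>y \<in> nbhd V E x. f y) mod int (card V)"

definition balanced_labelling :: "'a set \<Rightarrow> ('a \<Rightarrow> 'a \<Rightarrow> bool) \<Rightarrow> nat \<Rightarrow> ('a \<Rightarrow> int) \<Rightarrow> bool" where
  "balanced_labelling V E r f \<longleftrightarrow> Zn_labelling V f \<and>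
     (\<forall>x \<in> V. (\<Sum>y \<in> nbhd V E x. f y) mod int (card V) = (int r * f x) mod int (card V))"

definition has_balanced_labelling :: "'a set \<Rightarrow> ('a \<Rightarrow> 'a \<Rightarrow> bool) \<Rightarrow> nat \<Rightarrow> bool" where
  "has_balanced_labelling V E r \<longleftrightarrow> (\<exists>f. balanced_labelling V E r f)"

definition Zn_distance_antimagic :: "'a set \<Rightarrow> ('a \<Rightarrow> 'a \<Rightarrow> bool) \<Rightarrow> bool" where
  "Zn_distance_antimagic V E \<longleftrightarrow>
     (\<exists>f. Zn_labelling V f \<and> inj_on (weight V E f) V)"

definition Zn_distance_magic :: "'a set \<Rightarrow> ('a \<Rightarrow> 'a \<Rightarrow> bool) \<Rightarrow> bool" where
  "Zn_distance_magic V E \<longleftrightarrow>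
     (\<exists>f. Zn_labelling V f \<and> (\<forall>x \<in> V. \<forall>y \<in> V. weight V E f x = weight V E f y))"

definition strong_prod :: "('a \<Rightarrow> 'a \<Rightarrow> bool) \<Rightarrow> ('b \<Rightarrow> 'b \<Rightarrow> bool) \<Rightarrow> 'a set \<Rightarrow> 'b set
    \<Rightarrow> ('a \<times> 'b) \<Rightarrow> ('a \<times> 'b) \<Rightarrow> bool" where
  "strong_prod E1 E2 V1 V2 p q \<longleftrightarrow> p \<in> V1 \<times> V2 \<and> q \<in> V1 \<times> V2 \<and> p \<noteq> q \<and>
     (fst p = fst q \<or> E1 (fst p) (fst q)) \<and> (snd p = snd q \<or> E2 (snd p) (snd q))"

end

theory Submission
  imports Defs "HOL-Number_Theory.Cong"
begin

text \<open>Label the vertex (x1, x2) of the strong product by n2 f1(x1) + f2(x2), a bijection onto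
  {0..<n1 n2}. The closed neighbourhood of (x1, x2) is the product of the closed neighbourhoods,
  so its weight is n2 W1(x1) + W2(x2), where W1(x) = r2 f1(x) + (r2 + 1) \<Sum>{f1 y | y \<in> N(x)}
  and symmetrically for W2. Equal weights modulo n1 n2 force first W2(x2) = W2(y2) (mod n2),
  hence x2 = y2, and then W1(x1) = W1(y1) (mod n1). For a balanced labelling
  Wi = (r1 r2 + r1 + r2) fi (mod ni), and for a distance magic labelling W1 = r2 f1 + const
  (mod n1) and W2 = r1 f2 + const (mod n2); in both cases the coefficient is a unit modulo ni,
  so Wi mod ni determines the vertex.\<close>

text \<open>The function W of a factor whose partner in the strong product is s-regular.\<close>

definition strong_factor_weight :: "'a set \<Rightarrow> ('a \<Rightarrow> 'a \<Rightarrow> bool) \<Rightarrow> nat \<Rightarrow> ('a \<Rightarrow> int) \<Rightarrow> 'a \<Rightarrow> int"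
  where "strong_factor_weight V E s f x = int s * f x + (int s + 1) * (\<Sum>y \<in> nbhd V E x. f y)"

lemma bij_betw_mixed_radix:
  "bij_betw (\<lambda>(a, b). int n * a + b) ({0..<int m} \<times> {0..<int n}) {0..<int (m * n)}"
proof (rule bij_betw_byWitness[where f' = "\<lambda>k. (k div int n, k mod int n)"])
  show "(\<lambda>(a, b). int n * a + b) ` ({0..<int m} \<times> {0..<int n}) \<subseteq> {0..<int (m * n)}"
  proof clarify
    fix a b :: int
    assume a: "a \<in> {0..<int m}" and b: "b \<in> {0..<int n}"
    then have "int n * a + b < int n * (a + 1)"
      by (simp add: algebra_simps)
    also have "\<dots> \<le> int n * int m"
      using a by (intro mult_left_mono) simp_all
    finally show "int n * a + b \<in> {0..<int (m * n)}"
      using a b by (simp add: mult.commute)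
  qed
  show "(\<lambda>k. (k div int n, k mod int n)) ` {0..<int (m * n)} \<subseteq> {0..<int m} \<times> {0..<int n}"
  proof (rule image_subsetI)
    fix k assume k: "k \<in> {0..<int (m * n)}"
    then have n: "n > 0"
      by (auto intro: Nat.gr0I)
    have "k div int n * int n + k mod int n = k"
      by (rule div_mult_mod_eq)
    moreover have "0 \<le> k mod int n"
      using n by simp
    moreover have "k < int m * int n"
      using k by simp
    ultimately have "k div int n * int n < int m * int n"
      by linarith
    with n k show "(k div int n, k mod int n) \<in> {0..<int m} \<times> {0..<int n}"
      by (simp add: pos_imp_zdiv_nonneg_iff)
  qed
qed auto

lemma bij_betw_mixed_radix_labelling:
  assumes "bij_betw f1 V1 {0..<int n1}" and "bij_betw f2 V2 {0..<int n2}"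
  shows "bij_betw (\<lambda>(x1, x2). int n2 * f1 x1 + f2 x2) (V1 \<times> V2) {0..<int (n1 * n2)}"
proof -
  have "(\<lambda>(x1, x2). int n2 * f1 x1 + f2 x2) = (\<lambda>(a, b). int n2 * a + b) \<circ> map_prod f1 f2"
    by auto
  then show ?thesis
    using bij_betw_trans[OF bij_betw_map_prod[OF assms] bij_betw_mixed_radix] by simp
qed

lemma nbhd_strong_prod:
  assumes G: "simple_graph V1 E1" "simple_graph V2 E2" and x: "x1 \<in> V1" "x2 \<in> V2"
  shows "nbhd (V1 \<times> V2) (strong_prod E1 E2 V1 V2) (x1, x2) =
    insert x1 (nbhd V1 E1 x1) \<times> insert x2 (nbhd V2 E2 x2) - {(x1, x2)}"
proof -
  have "E1 x1 y \<Longrightarrow> y \<in> V1" "E2 x2 z \<Longrightarrow> z \<in> V2" for y z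
    using G by (auto simp: simple_graph_def)
  then show ?thesis
    using x by (auto simp: nbhd_def strong_prod_def)
qed

lemma finite_nbhd: "simple_graph V E \<Longrightarrow> finite (nbhd V E x)"
  by (simp add: simple_graph_def nbhd_def)

lemma not_in_nbhd: "simple_graph V E \<Longrightarrow> x \<notin> nbhd V E x"
  by (simp add: simple_graph_def nbhd_def)

lemma sum_closed_nbhd:
  "simple_graph V E \<Longrightarrow> sum f (insert x (nbhd V E x)) = f x + sum f (nbhd V E x)"
  by (simp add: finite_nbhd not_in_nbhd)

lemma card_closed_nbhd:
  "simple_graph V E \<Longrightarrow> regular V E r \<Longrightarrow> x \<in> V \<Longrightarrow> card (insert x (nbhd V E x)) = r + 1"
  by (simp add: finite_nbhd not_in_nbhd regular_def)

lemma sum_nbhd_strong_prod: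
  fixes f1 :: "'a \<Rightarrow> int" and f2 :: "'b \<Rightarrow> int"
  assumes G1: "simple_graph V1 E1" "regular V1 E1 r1"
    and G2: "simple_graph V2 E2" "regular V2 E2 r2"
    and x: "x1 \<in> V1" "x2 \<in> V2"
  shows "(\<Sum>(y1, y2) \<in> nbhd (V1 \<times> V2) (strong_prod E1 E2 V1 V2) (x1, x2). m * f1 y1 + f2 y2)
    = m * strong_factor_weight V1 E1 r2 f1 x1 + strong_factor_weight V2 E2 r1 f2 x2"
proof -
  let ?g = "\<lambda>(y1, y2). m * f1 y1 + f2 y2"
  let ?C1 = "insert x1 (nbhd V1 E1 x1)" and ?C2 = "insert x2 (nbhd V2 E2 x2)"
  have "sum ?g (?C1 \<times> ?C2) = (\<Sum>y1\<in>?C1. \<Sum>y2\<in>?C2. m * f1 y1 + f2 y2)"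
    by (simp add: sum.cartesian_product)
  also have "\<dots> = int (card ?C2) * m * sum f1 ?C1 + int (card ?C1) * sum f2 ?C2"
    by (simp add: sum.distrib sum_distrib_left mult.assoc)
  also have "\<dots> = (int r2 + 1) * m * (f1 x1 + sum f1 (nbhd V1 E1 x1))
      + (int r1 + 1) * (f2 x2 + sum f2 (nbhd V2 E2 x2))"
    using G1 G2 x by (simp add: card_closed_nbhd sum_closed_nbhd algebra_simps)
  finally have "sum ?g (?C1 \<times> ?C2) = \<dots>" .
  moreover have "sum ?g (?C1 \<times> ?C2) = ?g (x1, x2) + sum ?g (?C1 \<times> ?C2 - {(x1, x2)})"
    using G1 G2 by (intro sum.remove) (simp_all add: finite_nbhd)
  ultimately show ?thesis
    using nbhd_strong_prod[OF G1(1) G2(1) x]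
    by (simp add: strong_factor_weight_def algebra_simps)
qed

lemma cong_mixed_radix_low:
  fixes a b a' b' m k :: int
  assumes "[m * a + b = m * a' + b'] (mod k * m)"
  shows "[b = b'] (mod m)"
proof -
  have "[m * a + b = m * a' + b'] (mod m)"
    using assms by (simp add: cong_modulus_mult mult.commute[of k])
  then show ?thesis
    by (simp add: cong_def)
qed

lemma cong_mixed_radix_high:
  fixes a a' b m k :: int
  assumes "m \<noteq> 0" and "[m * a + b = m * a' + b] (mod k * m)"
  shows "[a = a'] (mod k)"
  using assms by (simp add: cong_iff_dvd_diff flip: right_diff_distrib)

lemma inj_on_mod_if_cong_affine:
  fixes f h :: "'a \<Rightarrow> int"
  assumes f: "bij_betw f V {0..<int n}" and c: "coprime c (int n)"
    and h: "\<forall>x \<in> V. [h x = c * f x + k] (mod int n)"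
  shows "inj_on (\<lambda>x. h x mod int n) V"
proof (rule inj_onI)
  fix x y assume xy: "x \<in> V" "y \<in> V" and "h x mod int n = h y mod int n"
  then have "[c * f x + k = c * f y + k] (mod int n)"
    using h by (metis cong_def cong_sym cong_trans)
  then have "[f x = f y] (mod int n)"
    using c by (metis cong_add_rcancel cong_mult_lcancel)
  moreover have "f x \<in> {0..<int n}" "f y \<in> {0..<int n}"
    using f xy bij_betwE by blast+
  ultimately have "f x = f y"
    using cong_less_imp_eq_int by auto
  then show "x = y"
    using f xy by (metis bij_betw_def inj_on_def)
qed

lemma strong_prod_distance_antimagic:
  assumes G1: "simple_graph V1 E1" "regular V1 E1 r1"
    and G2: "simple_graph V2 E2" "regular V2 E2 r2"
    and f1: "Zn_labelling V1 f1"
    and f2: "Zn_labelling V2 f2"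
    and W1: "inj_on (\<lambda>x. strong_factor_weight V1 E1 r2 f1 x mod int (card V1)) V1"
    and W2: "inj_on (\<lambda>x. strong_factor_weight V2 E2 r1 f2 x mod int (card V2)) V2"
  shows "Zn_distance_antimagic (V1 \<times> V2) (strong_prod E1 E2 V1 V2)"
proof -
  let ?n1 = "card V1" and ?n2 = "card V2"
  let ?f = "\<lambda>(x1, x2). int ?n2 * f1 x1 + f2 x2"
  let ?w = "weight (V1 \<times> V2) (strong_prod E1 E2 V1 V2) ?f"
  let ?W1 = "strong_factor_weight V1 E1 r2 f1" and ?W2 = "strong_factor_weight V2 E2 r1 f2"
  have card: "card (V1 \<times> V2) = ?n1 * ?n2"
    by (rule card_cartesian_product)
  have w: "?w (x1, x2) = (int ?n2 * ?W1 x1 + ?W2 x2) mod (int ?n1 * int ?n2)"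
    if "x1 \<in> V1" "x2 \<in> V2" for x1 x2
    unfolding weight_def sum_nbhd_strong_prod[OF G1 G2 that] card of_nat_mult ..
  have "Zn_labelling (V1 \<times> V2) ?f"
    using bij_betw_mixed_radix_labelling f1 f2 by (simp add: Zn_labelling_def card)
  moreover have "inj_on ?w (V1 \<times> V2)"
  proof (rule inj_onI, clarify)
    fix x1 x2 y1 y2 assume x: "x1 \<in> V1" "x2 \<in> V2" and y: "y1 \<in> V1" "y2 \<in> V2"
      and "?w (x1, x2) = ?w (y1, y2)"
    then have eq: "[int ?n2 * ?W1 x1 + ?W2 x2 = int ?n2 * ?W1 y1 + ?W2 y2] (mod int ?n1 * int ?n2)"
      using w x y by (simp add: cong_def)
    then have "[?W2 x2 = ?W2 y2] (mod int ?n2)"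
      by (rule cong_mixed_radix_low)
    then have "x2 = y2"
      using W2 x y by (simp add: cong_def inj_on_def)
    have "int ?n2 \<noteq> 0"
      using G2 x by (auto simp: simple_graph_def)
    moreover from eq \<open>x2 = y2\<close>
    have "[int ?n2 * ?W1 x1 + ?W2 y2 = int ?n2 * ?W1 y1 + ?W2 y2] (mod int ?n1 * int ?n2)"
      by simp
    ultimately have "[?W1 x1 = ?W1 y1] (mod int ?n1)"
      by (rule cong_mixed_radix_high)
    then have "x1 = y1"
      using W1 x y by (simp add: cong_def inj_on_def)
    with \<open>x2 = y2\<close> show "x1 = y1 \<and> x2 = y2"
      by simp
  qed
  ultimately show ?thesis
    unfolding Zn_distance_antimagic_def by blast
qed

lemma strong_factor_weight_cong_balanced:
  assumes "balanced_labelling V E r f" and "x \<in> V"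
  shows "[strong_factor_weight V E s f x = int (r * s + r + s) * f x] (mod int (card V))"
proof -
  have "[(\<Sum>y \<in> nbhd V E x. f y) = int r * f x] (mod int (card V))"
    using assms by (simp add: balanced_labelling_def cong_def)
  then have "[strong_factor_weight V E s f x = int s * f x + (int s + 1) * (int r * f x)]
      (mod int (card V))"
    unfolding strong_factor_weight_def by (intro cong_add cong_mult cong_refl)
  then show ?thesis
    by (simp add: algebra_simps)
qed

lemma strong_factor_weight_cong_magic:
  assumes "\<forall>x \<in> V. \<forall>y \<in> V. weight V E f x = weight V E f y"
  shows "\<exists>k. \<forall>x \<in> V. [strong_factor_weight V E s f x = int s * f x + k] (mod int (card V))"
proof (cases "V = {}")
  case False
  then obtain x0 where "x0 \<in> V"
    by blast
  have "[strong_factor_weight V E s f x = int s * f x + (int s + 1) * (\<Sum>y \<in> nbhd V E x0. f y)]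
      (mod int (card V))" if "x \<in> V" for x
  proof -
    have "[(\<Sum>y \<in> nbhd V E x. f y) = (\<Sum>y \<in> nbhd V E x0. f y)] (mod int (card V))"
      using assms \<open>x0 \<in> V\<close> that unfolding weight_def cong_def by blast
    then show ?thesis
      unfolding strong_factor_weight_def by (intro cong_add cong_mult cong_refl)
  qed
  then show ?thesis
    by blast
qed simp

theorem mainTheorem16:
  fixes V1 :: "'a set" and E1 :: "'a \<Rightarrow> 'a \<Rightarrow> bool"
    and V2 :: "'b set" and E2 :: "'b \<Rightarrow> 'b \<Rightarrow> bool"
    and r1 r2 n1 n2 :: nat
  assumes G1: "simple_graph V1 E1" "regular V1 E1 r1" "card V1 = n1"
    and G2: "simple_graph V2 E2" "regular V2 E2 r2" "card V2 = n2"
  shows "(has_balanced_labelling V1 E1 r1 \<and> has_balanced_labelling V2 E2 r2 \<and>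
            coprime (r1 * r2 + r1 + r2) (n1 * n2)
          \<longrightarrow> Zn_distance_antimagic (V1 \<times> V2) (strong_prod E1 E2 V1 V2))
       \<and> (Zn_distance_magic V1 E1 \<and> Zn_distance_magic V2 E2 \<and>
            gcd r1 n2 = 1 \<and> gcd r2 n1 = 1
          \<longrightarrow> Zn_distance_antimagic (V1 \<times> V2) (strong_prod E1 E2 V1 V2))"
proof (intro conjI impI)
  assume "has_balanced_labelling V1 E1 r1 \<and> has_balanced_labelling V2 E2 r2 \<and>
    coprime (r1 * r2 + r1 + r2) (n1 * n2)"
  then obtain f1 f2 where f1: "balanced_labelling V1 E1 r1 f1"
    and f2: "balanced_labelling V2 E2 r2 f2"
    and "coprime (int (r1 * r2 + r1 + r2)) (int n1)" "coprime (int (r2 * r1 + r2 + r1)) (int n2)"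
    unfolding has_balanced_labelling_def
    by (auto simp: coprime_int_iff ac_simps simp del: of_nat_add of_nat_mult)
  then show "Zn_distance_antimagic (V1 \<times> V2) (strong_prod E1 E2 V1 V2)"
    using G1 G2 strong_factor_weight_cong_balanced[OF f1] strong_factor_weight_cong_balanced[OF f2]
    by (intro strong_prod_distance_antimagic inj_on_mod_if_cong_affine[where k = 0])
      (auto simp: balanced_labelling_def Zn_labelling_def)
next
  assume "Zn_distance_magic V1 E1 \<and> Zn_distance_magic V2 E2 \<and> gcd r1 n2 = 1 \<and> gcd r2 n1 = 1"
  then obtain f1 f2 k1 k2 where "Zn_labelling V1 f1" "Zn_labelling V2 f2"
    and "\<forall>x \<in> V1. [strong_factor_weight V1 E1 r2 f1 x = int r2 * f1 x + k1] (mod int n1)"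
    and "\<forall>x \<in> V2. [strong_factor_weight V2 E2 r1 f2 x = int r1 * f2 x + k2] (mod int n2)"
    and "coprime (int r2) (int n1)" "coprime (int r1) (int n2)"
    unfolding Zn_distance_magic_def using G1(3) G2(3) strong_factor_weight_cong_magic
    by (metis coprime_iff_gcd_eq_1 coprime_int_iff)
  then show "Zn_distance_antimagic (V1 \<times> V2) (strong_prod E1 E2 V1 V2)"
    using G1 G2
    by (intro strong_prod_distance_antimagic inj_on_mod_if_cong_affine) (auto simp: Zn_labelling_def)
qed

end
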